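(* Let $n \ge 3$ be an integer, let $\alpha$ be a primitive element of $\mathbb{F}_{2^n}$ (identified with $\mathbb{F}_2^n$), and let $X = \{0, \alpha^{i_1}, \ldots, \alpha^{i_7}\}$ be a $3$-dimensional $\mathbb{F}_2$-subspace with $|\Delta(X)| = 42$. Then the cyclic shifts $\Phi_j(X)$, $0 \le j \le 2^n-2$, are $2^n-1$ pairwise distinct $3$-dimensional subspaces, and the $7\cdot(2^n-1)$ two-dimensional subspaces contained in these $2^n-1$ subspaces (seven in each) are pairwise distinct.
   Context: The cyclic shift mapping is $\Phi_j(\alpha^i) = \alpha^{i+j}$ (exponents modulo $2^n-1$), $\Phi_j(0)=0$, applied to sets elementwise. For a $3$-dimensional subspace $X = \{0,\alpha^{i_1},\ldots,\alpha^{i_7}\}$ with $i_1,\ldots,i_7 \in \{0,\ldots,2^n-2\}$ distinct, its difference set is $\Delta(X) = \{ i_r - i_s \bmod (2^n-1) : 1 \le r,s \le 7,\ r \ne s\}$. *)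

theory Defs
  imports Main
begin

text \<open>The field F_(2^n) is modelled as a finite field type of cardinality 2^n and
characteristic 2; it is viewed as the F_2-vector space F_2^n (scalars 0 and 1).\<close>

definition char2 :: "'a::field itself \<Rightarrow> bool" where
  "char2 _ \<longleftrightarrow> (1::'a) + 1 = 0"

definition primitive_elem :: "'a::field \<Rightarrow> bool" where
  "primitive_elem a \<longleftrightarrow> a \<noteq> 0 \<and> (\<forall>x. x \<noteq> 0 \<longrightarrow> (\<exists>i::nat. x = a ^ i))"

text \<open>F_2-linear algebra: the span of B consists of the sums of subsets of B
(the only scalars are 0 and 1); B is independent iff no nonempty subset sums to 0.\<close>

definition f2_span :: "'a::field set \<Rightarrow> 'a set" where
  "f2_span B = {sum id T | T. T \<subseteq> B}"

definition f2_indep :: "'a::field set \<Rightarrow> bool" where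
  "f2_indep B \<longleftrightarrow> (\<forall>T. T \<subseteq> B \<longrightarrow> T \<noteq> {} \<longrightarrow> sum id T \<noteq> 0)"

definition f2_subspace :: "'a::field set \<Rightarrow> bool" where
  "f2_subspace S \<longleftrightarrow> 0 \<in> S \<and> (\<forall>x\<in>S. \<forall>y\<in>S. x + y \<in> S)"

definition f2_subspace_dim :: "'a::field set \<Rightarrow> nat \<Rightarrow> bool" where
  "f2_subspace_dim S d \<longleftrightarrow> f2_subspace S \<and>
     (\<exists>B. finite B \<and> card B = d \<and> f2_indep B \<and> f2_span B = S)"

text \<open>Discrete logarithm to base a, exponents in {0..N-1} (N = 2^n - 1).\<close>
definition dlog :: "'a::field \<Rightarrow> nat \<Rightarrow> 'a \<Rightarrow> nat" where
  "dlog a N x = (THE i. i < N \<and> a ^ i = x)"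

definition Phi :: "'a::field \<Rightarrow> nat \<Rightarrow> nat \<Rightarrow> 'a \<Rightarrow> 'a" where
  "Phi a N j x = (if x = 0 then 0 else a ^ ((dlog a N x + j) mod N))"

definition Phi_set :: "'a::field \<Rightarrow> nat \<Rightarrow> nat \<Rightarrow> 'a set \<Rightarrow> 'a set" where
  "Phi_set a N j X = Phi a N j ` X"

definition Delta :: "nat \<Rightarrow> nat set \<Rightarrow> int set" where
  "Delta N I = {(int r - int s) mod int N | r s. r \<in> I \<and> s \<in> I \<and> r \<noteq> s}"

end

theory Submission
  imports Defs
begin

text \<open>Multiplication by \<open>\<alpha>\<^sup>j\<close> is the shift \<open>\<Phi>\<^sub>j\<close>, so every shift of \<open>X\<close> is again a
3-dimensional subspace, and a 3-dimensional subspace contains exactly \<open>7 \<cdot> 6 / 6 = 7\<close>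
planes (count ordered pairs of distinct nonzero vectors: each spans one plane, each plane
contains six). The condition \<open>|\<Delta>(X)| = 42 = 7 \<cdot> 6\<close> says that all differences of exponents
are distinct modulo \<open>2\<^sup>n - 1\<close>, hence two distinct shifts share at most one nonzero element.
Since a plane has three nonzero elements, no plane lies in two shifts; in particular the
shifts are pairwise distinct.\<close>

lemma char2_add_self: "char2 TYPE('a::field) \<Longrightarrow> (x::'a) + x = 0"
  unfolding char2_def by (metis distrib_left mult.right_neutral mult_zero_right)

lemma char2_two: "char2 TYPE('a::field) \<Longrightarrow> (2::'a) = 0"
  unfolding char2_def by simp

lemma char2_add_eq_0_iff: "char2 TYPE('a::field) \<Longrightarrow> (x::'a) + y = 0 \<longleftrightarrow> x = y"
  by (metis add_left_cancel char2_add_self)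

lemma card_off_diagonal:
  assumes "finite A"
  shows "card (A \<times> A - Id) = card A * (card A - 1)"
proof -
  have "A \<times> A - Id = A \<times> A - (\<lambda>x. (x, x)) ` A" by auto
  moreover have "card ((\<lambda>x. (x, x)) ` A) = card A" by (simp add: card_image inj_on_def)
  ultimately show ?thesis
    using assms by (simp add: card_Diff_subset card_cartesian_product image_subset_iff diff_mult_distrib2)
qed

lemma f2_span_eq_image: "f2_span B = sum id ` Pow B"
  unfolding f2_span_def by auto

lemma card_f2_span:
  assumes c: "char2 TYPE('a::field)" and B: "finite (B::'a set)" "f2_indep B"
  shows "card (f2_span B) = 2 ^ card B"
proof -
  have "inj_on (sum id) (Pow B)"
  proof (rule inj_onI)
    fix T T' assume T: "T \<in> Pow B" "T' \<in> Pow B" and eq: "sum id T = sum id T'"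
    have fin: "finite T" "finite T'" using T B(1) finite_subset by auto
    have "sum id (T - T') + sum id (T \<inter> T') = sum id (T' - T) + sum id (T \<inter> T')"
      using eq fin by (metis add.commute inf_commute sum.Int_Diff)
    hence "sum id (T - T') = sum id (T' - T)" by simp
    hence "sum id (T - T') + sum id (T' - T) = 0"
      using char2_add_self[OF c] by metis
    hence "sum id ((T - T') \<union> (T' - T)) = 0"
      using fin by (subst sum.union_disjoint) auto
    moreover have "(T - T') \<union> (T' - T) \<subseteq> B" using T by auto
    ultimately have "(T - T') \<union> (T' - T) = {}"
      using B(2) unfolding f2_indep_def by blast
    thus "T = T'" by blast
  qed
  thus ?thesis using B(1) by (simp only: f2_span_eq_image card_image card_Pow)
qed

lemma f2_subspace_dim_card:
  assumes "char2 TYPE('a::field)" "f2_subspace_dim (S::'a set) d"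
  shows "finite S" "card S = 2 ^ d"
  using assms card_f2_span unfolding f2_subspace_dim_def f2_span_eq_image by auto

lemma f2_span_pair:
  assumes "(x::'a::field) \<noteq> y"
  shows "f2_span {x, y} = {0, x, y, x + y}"
proof -
  have "Pow {x, y} = {{}, {x}, {y}, {x, y}}" by blast
  thus ?thesis using assms by (simp add: f2_span_eq_image)
qed

lemma f2_indep_pair:
  assumes "(x::'a::field) \<noteq> y"
  shows "f2_indep {x, y} \<longleftrightarrow> x \<noteq> 0 \<and> y \<noteq> 0 \<and> x + y \<noteq> 0"
proof -
  have "T \<subseteq> {x, y} \<longleftrightarrow> T = {} \<or> T = {x} \<or> T = {y} \<or> T = {x, y}" for T by blast
  thus ?thesis using assms unfolding f2_indep_def by auto
qed

lemma f2_plane_iff: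
  assumes c: "char2 TYPE('a::field)"
  shows "f2_subspace_dim (Y::'a set) 2 \<longleftrightarrow> (\<exists>x y. x \<noteq> 0 \<and> y \<noteq> 0 \<and> x \<noteq> y \<and> Y = {0, x, y, x + y})"
proof
  assume "f2_subspace_dim Y 2"
  then obtain x y where "x \<noteq> y" "f2_indep {x, y}" "f2_span {x, y} = Y"
    unfolding f2_subspace_dim_def card_2_iff by blast
  thus "\<exists>x y. x \<noteq> 0 \<and> y \<noteq> 0 \<and> x \<noteq> y \<and> Y = {0, x, y, x + y}"
    using f2_indep_pair f2_span_pair by metis
next
  assume "\<exists>x y. x \<noteq> 0 \<and> y \<noteq> 0 \<and> x \<noteq> y \<and> Y = {0, x, y, x + y}"
  then obtain x y where xy: "x \<noteq> 0" "y \<noteq> 0" "x \<noteq> y" and Y: "Y = {0, x, y, x + y}" by blast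
  have "f2_subspace Y"
    unfolding Y f2_subspace_def by (auto simp: ac_simps char2_add_self[OF c] char2_two[OF c])
  moreover have "f2_indep {x, y}" using xy c by (simp add: f2_indep_pair char2_add_eq_0_iff)
  ultimately show "f2_subspace_dim Y 2"
    unfolding f2_subspace_dim_def using xy(3) f2_span_pair[OF xy(3)] Y
    by (intro conjI exI[of _ "{x, y}"]) auto
qed

lemma f2_plane_eq:
  assumes c: "char2 TYPE('a::field)" and Y: "f2_subspace_dim Y 2"
    and pq: "p \<in> Y" "q \<in> Y" "p \<noteq> 0" "q \<noteq> 0" "p \<noteq> (q::'a)"
  shows "Y = {0, p, q, p + q}"
proof (rule card_subset_eq[symmetric])
  show "finite Y" using f2_subspace_dim_card[OF c Y] by simp
  show "{0, p, q, p + q} \<subseteq> Y"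
    using Y pq unfolding f2_subspace_dim_def f2_subspace_def by auto
  have "p + q \<noteq> 0" "p + q \<noteq> p" "p + q \<noteq> q"
    using pq c by (auto simp: char2_add_eq_0_iff)
  thus "card {0, p, q, p + q} = card Y"
    using pq f2_subspace_dim_card[OF c Y] by simp
qed

lemma f2_nonzero_pairs_UN_planes:
  assumes c: "char2 TYPE('a::field)" and Z: "f2_subspace (Z::'a set)"
  shows "(\<Union>Y\<in>{Y. f2_subspace_dim Y 2 \<and> Y \<subseteq> Z}. (Y - {0}) \<times> (Y - {0}) - Id)
    = (Z - {0}) \<times> (Z - {0}) - Id"
proof (intro equalityI subsetI)
  fix z assume "z \<in> (Z - {0}) \<times> (Z - {0}) - Id"
  then obtain p q where z: "z = (p, q)" "p \<in> Z" "q \<in> Z" "p \<noteq> 0" "q \<noteq> 0" "p \<noteq> q"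
    by auto
  have "{0, p, q, p + q} \<subseteq> Z" using Z z unfolding f2_subspace_def by simp
  moreover have "f2_subspace_dim {0, p, q, p + q} 2" using z f2_plane_iff[OF c] by blast
  ultimately show "z \<in> (\<Union>Y\<in>{Y. f2_subspace_dim Y 2 \<and> Y \<subseteq> Z}. (Y - {0}) \<times> (Y - {0}) - Id)"
    using z by blast
qed blast

lemma card_f2_planes:
  assumes c: "char2 TYPE('a::field)" and Z: "f2_subspace (Z::'a set)" "finite Z"
  shows "6 * card {Y. f2_subspace_dim Y 2 \<and> Y \<subseteq> Z} = (card Z - 1) * (card Z - 2)"
proof -
  define P where "P = {Y. f2_subspace_dim Y 2 \<and> Y \<subseteq> Z}"
  define pairs where "pairs Y = (Y - {0}) \<times> (Y - {0}) - Id" for Y :: "'a set"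
  have "P \<subseteq> Pow Z" unfolding P_def by blast
  hence "finite P" using Z(2) by (meson finite_Pow_iff finite_subset)
  have card_pairs: "card (pairs Y) = 6" if "Y \<in> P" for Y
  proof -
    have Y: "f2_subspace_dim Y 2" using that unfolding P_def by blast
    hence "0 \<in> Y" unfolding f2_subspace_dim_def f2_subspace_def by blast
    hence "card (Y - {0}) = 3" using f2_subspace_dim_card[OF c Y] by simp
    thus ?thesis
      unfolding pairs_def using card_off_diagonal[of "Y - {0}"] f2_subspace_dim_card(1)[OF c Y] by simp
  qed
  have disjoint: "pairs Y \<inter> pairs Y' = {}" if "Y \<in> P" "Y' \<in> P" "Y \<noteq> Y'" for Y Y'
  proof (rule ccontr)
    assume "pairs Y \<inter> pairs Y' \<noteq> {}"
    then obtain p q where "p \<in> Y" "q \<in> Y" "p \<in> Y'" "q \<in> Y'" "p \<noteq> 0" "q \<noteq> 0" "p \<noteq> q"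
      unfolding pairs_def by auto
    hence "Y = {0, p, q, p + q}" "Y' = {0, p, q, p + q}"
      using that(1,2) f2_plane_eq[OF c] unfolding P_def by auto
    thus False using that(3) by simp
  qed
  have finite_pairs: "finite (pairs Y)" if "Y \<in> P" for Y
    using card_pairs[OF that] card.infinite by fastforce
  have "card (pairs Z) = card (\<Union>Y\<in>P. pairs Y)"
    unfolding P_def pairs_def f2_nonzero_pairs_UN_planes[OF c Z(1)] by (rule refl)
  also have "\<dots> = (\<Sum>Y\<in>P. card (pairs Y))"
    using \<open>finite P\<close> finite_pairs disjoint
    by (intro card_UN_disjoint) auto
  also have "\<dots> = 6 * card P" using card_pairs by simp
  finally have "card (pairs Z) = 6 * card P" .
  moreover have "card (pairs Z) = (card Z - 1) * (card Z - 2)"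
    using Z card_off_diagonal[of "Z - {0}"] unfolding pairs_def f2_subspace_def
    by (simp add: card_Diff_singleton numeral_2_eq_2)
  ultimately show ?thesis unfolding P_def by simp
qed

lemma card_f2_planes_in_dim3:
  assumes c: "char2 TYPE('a::field)" and Z: "f2_subspace_dim (Z::'a set) 3"
  shows "card {Y. f2_subspace_dim Y 2 \<and> Y \<subseteq> Z} = 7"
  using card_f2_planes[OF c _ f2_subspace_dim_card(1)[OF c Z]] f2_subspace_dim_card(2)[OF c Z] Z
  unfolding f2_subspace_dim_def by simp

lemma f2_subspace_dim_scale:
  assumes c0: "(c::'a::field) \<noteq> 0" and S: "f2_subspace_dim S d"
  shows "f2_subspace_dim ((*) c ` S) d"
proof -
  obtain B where B: "finite B" "card B = d" "f2_indep B" "f2_span B = S"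
    using S unfolding f2_subspace_dim_def by auto
  have inj: "inj_on ((*) c) A" for A using c0 by (auto intro: inj_onI)
  have sum_scale: "sum id ((*) c ` T) = c * sum id T" for T
    using inj[of T] by (simp add: sum.reindex sum_distrib_left)
  have "f2_subspace ((*) c ` S)"
    using S unfolding f2_subspace_dim_def f2_subspace_def
    by (auto simp flip: distrib_left)
  moreover have "f2_indep ((*) c ` B)"
    unfolding f2_indep_def
  proof (intro allI impI)
    fix T assume "T \<subseteq> (*) c ` B" "T \<noteq> {}"
    then obtain T0 where "T0 \<subseteq> B" "T0 \<noteq> {}" "T = (*) c ` T0"
      by (auto simp: subset_image_iff)
    thus "sum id T \<noteq> 0" using B(3) c0 sum_scale unfolding f2_indep_def by auto
  qed
  moreover have "f2_span ((*) c ` B) = (*) c ` S"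
  proof -
    have "sum id ` Pow ((*) c ` B) = (\<lambda>T. sum id ((*) c ` T)) ` Pow B"
      by (auto simp: Pow_def subset_image_iff image_iff)
    thus ?thesis unfolding B(4)[symmetric] f2_span_eq_image sum_scale by (simp add: image_image)
  qed
  ultimately show ?thesis
    unfolding f2_subspace_dim_def using B(1,2) card_image[OF inj]
    by (intro conjI exI[of _ "(*) c ` B"]) auto
qed

lemma translates_overlap_unique:
  fixes N :: nat and I :: "nat set"
  assumes I: "finite I" "card (Delta N I) = card I * (card I - 1)"
    and jk: "j < N" "k < N" "j \<noteq> k"
    and rs: "r \<in> I" "s \<in> I" "r' \<in> I" "s' \<in> I"
    and eq: "(r + j) mod N = (s + k) mod N" "(r' + j) mod N = (s' + k) mod N"
  shows "r = r'"
proof -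
  define diff where "diff = (\<lambda>(r::nat, s::nat). (int r - int s) mod int N)"
  have "Delta N I = diff ` (I \<times> I - Id)" unfolding Delta_def diff_def by auto
  hence inj: "inj_on diff (I \<times> I - Id)"
    using I by (intro eq_card_imp_inj_on) (simp_all add: card_off_diagonal)
  have diff_translate: "(u, v) \<in> I \<times> I - Id \<and> diff (u, v) = (int k - int j) mod int N"
    if "u \<in> I" "v \<in> I" "(u + j) mod N = (v + k) mod N" for u v
  proof -
    have "(int u + int j) mod int N = (int v + int k) mod int N"
      using that(3) by (metis of_nat_add zmod_int)
    hence dvd: "int N dvd (int u - int v) - (int k - int j)"
      by (simp add: mod_eq_dvd_iff algebra_simps)
    have "u \<noteq> v"
    proof
      assume "u = v"
      hence "int j mod int N = int k mod int N" using dvd by (simp add: mod_eq_dvd_iff)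
      thus False using jk by (simp add: zmod_int)
    qed
    thus ?thesis using that dvd unfolding diff_def by (simp add: mod_eq_dvd_iff)
  qed
  have "(r, s) = (r', s')"
    using inj diff_translate[OF rs(1,2) eq(1)] diff_translate[OF rs(3,4) eq(2)]
    unfolding inj_on_def by metis
  thus ?thesis by simp
qed

lemma nonzero_power_card_minus_one:
  fixes x :: "'a::{field,finite}"
  assumes "x \<noteq> 0"
  shows "x ^ (card (UNIV::'a set) - 1) = 1"
proof -
  have "(\<Prod>y\<in>UNIV - {0}. x * y) = (\<Prod>y\<in>UNIV - {0}. y)"
    by (rule prod.reindex_bij_witness[of _ "\<lambda>y. y / x" "\<lambda>y. x * y"]) (use assms in auto)
  moreover have "(\<Prod>y\<in>UNIV - {0}. x * y) = x ^ (card (UNIV::'a set) - 1) * (\<Prod>y\<in>UNIV - {0}. y)"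
    by (simp add: prod.distrib card_Diff_singleton)
  ultimately show ?thesis by simp
qed

lemma power_mod_exponent:
  fixes a :: "'a::monoid_mult"
  assumes "a ^ N = 1"
  shows "a ^ (m mod N) = a ^ m"
proof -
  have "a ^ m = a ^ (N * (m div N) + m mod N)" by simp
  also have "\<dots> = (a ^ N) ^ (m div N) * a ^ (m mod N)" by (simp only: power_add power_mult)
  finally show ?thesis using assms by simp
qed

lemma card_UNIV_field_ge_two: "2 \<le> card (UNIV :: 'a::{field,finite} set)"
proof -
  have "card {0::'a, 1} \<le> card (UNIV::'a set)" by (rule card_mono) simp_all
  thus ?thesis by simp
qed

lemma primitive_power_eq_iff:
  fixes a :: "'a::{field,finite}"
  assumes a: "primitive_elem a" and N: "N = card (UNIV::'a set) - 1"
  shows "a ^ m = a ^ m' \<longleftrightarrow> m mod N = m' mod N"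
proof -
  have a0: "a \<noteq> 0" using a unfolding primitive_elem_def by blast
  have aN: "a ^ N = 1" using nonzero_power_card_minus_one[OF a0] N by simp
  have "N > 0" using N card_UNIV_field_ge_two[where 'a='a] by simp
  have "(\<lambda>i. a ^ i) ` {..<N} = UNIV - {0}"
  proof (intro equalityI subsetI)
    fix x :: 'a assume "x \<in> UNIV - {0}"
    then obtain i where "x = a ^ i" using a unfolding primitive_elem_def by auto
    hence "x = a ^ (i mod N)" "i mod N < N" using power_mod_exponent[OF aN] \<open>N > 0\<close> by auto
    thus "x \<in> (\<lambda>i. a ^ i) ` {..<N}" by blast
  qed (use a0 in auto)
  moreover have "card (UNIV - {0::'a}) = card {..<N}" using N by (simp add: card_Diff_singleton)
  ultimately have "inj_on (\<lambda>i. a ^ i) {..<N}" by (metis eq_card_imp_inj_on finite_lessThan)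
  hence "a ^ (m mod N) = a ^ (m' mod N) \<longleftrightarrow> m mod N = m' mod N"
    using \<open>N > 0\<close> unfolding inj_on_def by auto
  thus ?thesis by (simp add: power_mod_exponent[OF aN])
qed

lemma Phi_eq_scale:
  fixes a :: "'a::{field,finite}"
  assumes a: "primitive_elem a" and N: "N = card (UNIV::'a set) - 1"
  shows "Phi a N j = (*) (a ^ j)"
proof
  fix x :: 'a
  note power_eq = primitive_power_eq_iff[OF a N]
  show "Phi a N j x = a ^ j * x"
  proof (cases "x = 0")
    case False
    then obtain i where i: "x = a ^ i" using a unfolding primitive_elem_def by auto
    have "N > 0" using N card_UNIV_field_ge_two[where 'a='a] by simp
    have "\<exists>!l. l < N \<and> a ^ l = x"
    proof (rule ex1I)
      show "i mod N < N \<and> a ^ (i mod N) = x"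
        unfolding i power_eq using \<open>N > 0\<close> by simp
      show "l = i mod N" if "l < N \<and> a ^ l = x" for l
        using that unfolding i power_eq by (metis mod_less)
    qed
    hence "dlog a N x < N \<and> a ^ dlog a N x = x" unfolding dlog_def by (rule theI')
    hence dlog: "a ^ dlog a N x = x" ..
    have "a ^ ((dlog a N x + j) mod N) = a ^ (dlog a N x + j)"
      unfolding power_eq by simp
    thus ?thesis using False dlog unfolding Phi_def by (simp add: power_add mult.commute)
  qed (simp add: Phi_def)
qed

lemma no_plane_in_two_shifts:
  fixes a :: "'a::{field,finite}"
  assumes c: "char2 TYPE('a)" and a: "primitive_elem a" and N: "N = card (UNIV::'a set) - 1"
    and I: "finite I" "card (Delta N I) = card I * (card I - 1)"
    and X: "X = insert 0 ((\<lambda>i. a ^ i) ` I)"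
    and jk: "j < N" "k < N" "j \<noteq> k"
    and Y: "f2_subspace_dim Y 2" "Y \<subseteq> (*) (a ^ j) ` X" "Y \<subseteq> (*) (a ^ k) ` X"
  shows False
proof -
  obtain x y where "x \<noteq> 0" "y \<noteq> 0" "x \<noteq> y" "Y = {0, x, y, x + y}"
    using Y(1) unfolding f2_plane_iff[OF c] by blast
  hence xy: "x \<in> Y" "y \<in> Y" "x \<noteq> 0" "y \<noteq> 0" "x \<noteq> y" by simp_all
  have translate: "\<exists>r\<in>I. z = a ^ (r + l)" if "z \<in> (*) (a ^ l) ` X" "z \<noteq> 0" for z l
    using that unfolding X by (auto simp: power_add mult.commute)
  obtain r s where rs: "r \<in> I" "s \<in> I" and x: "x = a ^ (r + j)" "x = a ^ (s + k)"
    using translate[of x j] translate[of x k] xy(1,3) Y(2,3) by blast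
  obtain r' s' where rs': "r' \<in> I" "s' \<in> I" and y: "y = a ^ (r' + j)" "y = a ^ (s' + k)"
    using translate[of y j] translate[of y k] xy(2,4) Y(2,3) by blast
  have "(r + j) mod N = (s + k) mod N" "(r' + j) mod N = (s' + k) mod N"
    unfolding primitive_power_eq_iff[OF a N, symmetric] using x y by simp_all
  hence "r = r'" using translates_overlap_unique[OF I jk rs rs'] by blast
  thus False using x(1) y(1) xy(5) by simp
qed

theorem lemma8:
  fixes a :: "'a::{field,finite}" and n :: nat and I :: "nat set" and X :: "'a set"
  assumes "n \<ge> 3"
    and "card (UNIV :: 'a set) = 2 ^ n"
    and "char2 TYPE('a)"
    and "primitive_elem a"
    and "I \<subseteq> {..<2 ^ n - 1}" and "card I = 7"
    and "X = insert 0 ((\<lambda>i. a ^ i) ` I)"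
    and "f2_subspace_dim X 3"
    and "card (Delta (2 ^ n - 1) I) = 42"
  shows "(\<forall>j < 2 ^ n - 1. f2_subspace_dim (Phi_set a (2 ^ n - 1) j X) 3)
       \<and> inj_on (\<lambda>j. Phi_set a (2 ^ n - 1) j X) {..<2 ^ n - 1}
       \<and> (\<forall>j < 2 ^ n - 1. card {Y. f2_subspace_dim Y 2 \<and> Y \<subseteq> Phi_set a (2 ^ n - 1) j X} = 7)
       \<and> (\<forall>j < 2 ^ n - 1. \<forall>k < 2 ^ n - 1. \<forall>Y. j \<noteq> k \<longrightarrow> f2_subspace_dim Y 2
            \<longrightarrow> Y \<subseteq> Phi_set a (2 ^ n - 1) j X \<longrightarrow> \<not> Y \<subseteq> Phi_set a (2 ^ n - 1) k X)
       \<and> card (\<Union>j < 2 ^ n - 1. {Y. f2_subspace_dim Y 2 \<and> Y \<subseteq> Phi_set a (2 ^ n - 1) j X})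
           = 7 * (2 ^ n - 1)"
proof -
  define N where "N = (2::nat) ^ n - 1"
  have N: "N = card (UNIV::'a set) - 1" using assms(2) N_def by simp
  define M where "M j = (*) (a ^ j) ` X" for j
  have shift: "Phi_set a N j X = M j" for j
    unfolding Phi_set_def M_def Phi_eq_scale[OF assms(4) N] ..
  have I: "finite I" "card (Delta N I) = card I * (card I - 1)"
    using assms(6,9) N_def card.infinite by fastforce+
  have "a \<noteq> 0" using assms(4) unfolding primitive_elem_def by blast
  hence dim3: "f2_subspace_dim (M j) 3" for j
    unfolding M_def by (intro f2_subspace_dim_scale assms(8)) simp
  have planes: "card {Y. f2_subspace_dim Y 2 \<and> Y \<subseteq> M j} = 7" for j
    using card_f2_planes_in_dim3[OF assms(3) dim3] .
  have disjoint: "\<not> Y \<subseteq> M k"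
    if "j < N" "k < N" "j \<noteq> k" "f2_subspace_dim Y 2" "Y \<subseteq> M j" for j k Y
    using no_plane_in_two_shifts[OF assms(3,4) N I assms(7) that(1-3)]
      that(4,5) unfolding M_def by blast
  have "inj_on M {..<N}"
  proof (rule inj_onI, rule ccontr)
    fix j k assume jk: "j \<in> {..<N}" "k \<in> {..<N}" "M j = M k" "j \<noteq> k"
    obtain Y where "f2_subspace_dim Y 2" "Y \<subseteq> M j"
      using planes[of j] by (metis (no_types, lifting) Collect_empty_eq card.empty zero_neq_numeral)
    thus False using disjoint[of j k Y] jk by auto
  qed
  moreover have "card (\<Union>j<N. {Y. f2_subspace_dim Y 2 \<and> Y \<subseteq> M j}) = 7 * N"
    using planes by (subst card_UN_disjoint) (auto dest: disjoint)
  ultimately show ?thesis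
    unfolding N_def[symmetric] shift using dim3 planes disjoint by blast
qed

end
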